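(* Let $f:M\to M$ be a continuous map of a compact metric space and $\{\phi_n\}$ a sequence of continuous functions such that for some $L>0$, $|\phi_n(x)|/n\le L$ for $\nu$-a.e. $x$, all $n$, and all $\nu\in\mathcal M_f$. If $\{\phi_n\}$ is subadditive, then $\lim_{n\to\infty}P(\phi_n/n)$ exists and equals $\inf_{n>0}P(\phi_n/n)$. If $\{\phi_n\}$ is superadditive, then $\lim_{n\to\infty}P(\phi_n/n)$ exists and equals $\sup_{n>0}P(\phi_n/n)$.
   Context: $\mathcal M_f$ is the set of $f$-invariant Borel probability measures; $P(\phi)=\sup_{\nu\in\mathcal M_f}\{h(\nu)+\int\phi\,d\nu\}$ is the topological pressure of continuous $\phi$, $h$ the metric entropy. Subadditive (resp. superadditive): $\phi_{n+m}\le\phi_n+\phi_m\circ f^n$ (resp. $\ge$) for all $n,m$. *)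

theory Defs
  imports "HOL-Probability.Probability"
begin

definition invariant_measures :: "('a::metric_space \<Rightarrow> 'a) \<Rightarrow> 'a set \<Rightarrow> 'a measure set" where
  "invariant_measures f M = {\<nu>. prob_space \<nu> \<and> sets \<nu> = sets (restrict_space borel M) \<and>
      (\<forall>A\<in>sets \<nu>. measure \<nu> (f -` A \<inter> M) = measure \<nu> A)}"

definition finite_partition :: "'a measure \<Rightarrow> 'a set set \<Rightarrow> bool" where
  "finite_partition \<nu> P \<longleftrightarrow> finite P \<and> P \<subseteq> sets \<nu> \<and> \<Union>P = space \<nu> \<and>
      (\<forall>A\<in>P. \<forall>B\<in>P. A \<noteq> B \<longrightarrow> A \<inter> B = {})"

definition part_entropy :: "'a measure \<Rightarrow> 'a set set \<Rightarrow> real" where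
  "part_entropy \<nu> P = - (\<Sum>A\<in>P. if measure \<nu> A = 0 then 0 else measure \<nu> A * ln (measure \<nu> A))"

text \<open>The join  P \<or> f^{-1}P \<or> ... \<or> f^{-(n-1)}P.\<close>
definition join_iter :: "('a \<Rightarrow> 'a) \<Rightarrow> 'a set \<Rightarrow> 'a set set \<Rightarrow> nat \<Rightarrow> 'a set set" where
  "join_iter f M P n = (\<lambda>A. M \<inter> (\<Inter>i<n. (f ^^ i) -` A i)) ` (Pi\<^sub>E {..<n} (\<lambda>_. P))"

definition entropy_wrt :: "'a measure \<Rightarrow> ('a \<Rightarrow> 'a) \<Rightarrow> 'a set set \<Rightarrow> real" where
  "entropy_wrt \<nu> f P =
     lim (\<lambda>n. part_entropy \<nu> (join_iter f (space \<nu>) P (Suc n)) / real (Suc n))"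

definition ks_entropy :: "'a measure \<Rightarrow> ('a \<Rightarrow> 'a) \<Rightarrow> ereal" where
  "ks_entropy \<nu> f = (SUP P \<in> {P. finite_partition \<nu> P}. ereal (entropy_wrt \<nu> f P))"

text \<open>Topological pressure via the variational principle, as in the paper.\<close>
definition pressure :: "('a::metric_space \<Rightarrow> 'a) \<Rightarrow> 'a set \<Rightarrow> ('a \<Rightarrow> real) \<Rightarrow> ereal" where
  "pressure f M \<phi> = (SUP \<nu> \<in> invariant_measures f M. ks_entropy \<nu> f + ereal (integral\<^sup>L \<nu> \<phi>))"

end

theory Submission
  imports Defs
begin

text \<open>For an invariant measure \<open>\<nu>\<close>, invariance makes \<open>a\<^sub>n = \<integral>\<phi>\<^sub>n d\<nu>\<close> a subadditive
  sequence with \<open>|a\<^sub>n| \<le> n L\<close>, and writing \<open>n = q k + r\<close> gives Fekete's estimate in the uniform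
  form \<open>a\<^sub>n/n \<le> a\<^sub>k/k + 2 k L / n\<close>, with a constant independent of \<open>\<nu>\<close>. Since the pressure is a
  supremum over \<open>\<nu>\<close> of \<open>h(\<nu>) + \<integral>\<phi>\<close>, the same estimate holds for \<open>P(\<phi>\<^sub>n/n)\<close>, and any
  sequence with \<open>P\<^sub>n \<le> P\<^sub>k + c\<^sub>k/n\<close> converges to its infimum. The superadditive case is the
  subadditive one for \<open>-\<phi>\<close>.\<close>

lemma subadditive_avg_le:
  fixes a :: "nat \<Rightarrow> real" and L :: real
  assumes sub: "\<And>n m. n \<ge> 1 \<Longrightarrow> m \<ge> 1 \<Longrightarrow> a (n + m) \<le> a n + a m"
    and bound: "\<And>n. n \<ge> 1 \<Longrightarrow> \<bar>a n\<bar> \<le> real n * L"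
    and "k \<ge> 1" and "n \<ge> 1"
  shows "a n / real n \<le> a k / real k + 2 * real k * L / real n"
proof -
  define q r where "q = n div k" and "r = n mod k"
  have n_eq: "n = q * k + r" and "r < k"
    using \<open>k \<ge> 1\<close> by (simp_all add: q_def r_def)
  have "0 \<le> real k * L"
    using bound[OF \<open>k \<ge> 1\<close>] by linarith
  then have L: "L \<ge> 0"
    using \<open>k \<ge> 1\<close> by (simp add: zero_le_mult_iff)
  have multiple: "a (j * k) \<le> real j * a k" if "j \<ge> 1" for j
    using that
  proof (induction j rule: dec_induct)
    case (step j)
    have "a (Suc j * k) \<le> a (j * k) + a k"
      using sub[of "j * k" k] step \<open>k \<ge> 1\<close> by (simp add: add.commute)
    with step show ?case by (simp add: algebra_simps)
  qed simp
  have "a n \<le> real q * a k + real r * L"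
  proof (cases "q = 0")
    case True
    then show ?thesis using bound[OF \<open>n \<ge> 1\<close>] n_eq by simp
  next
    case False
    show ?thesis
    proof (cases "r = 0")
      case True
      then show ?thesis using multiple[of q] False n_eq L by simp
    next
      case False
      then have "a n \<le> a (q * k) + a r"
        using sub[of "q * k" r] n_eq \<open>q \<noteq> 0\<close> \<open>k \<ge> 1\<close> by simp
      then show ?thesis using multiple[of q] bound[of r] \<open>q \<noteq> 0\<close> False by simp
    qed
  qed
  moreover have "- real r * L \<le> real r * a k / real k"
    using bound[OF \<open>k \<ge> 1\<close>] \<open>k \<ge> 1\<close> mult_left_mono[of "- real k * L" "a k" "real r"]
    by (simp add: field_simps)
  moreover have "real r * L \<le> real k * L"
    using \<open>r < k\<close> L by (simp add: mult_right_mono)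
  moreover have "real n * (a k / real k) = real q * a k + real r * a k / real k"
    using \<open>k \<ge> 1\<close> n_eq by (simp add: field_simps)
  ultimately have "a n \<le> real n * (a k / real k) + 2 * real k * L"
    by linarith
  then show ?thesis
    using \<open>n \<ge> 1\<close> by (simp add: field_simps)
qed

lemma ereal_tendsto_INF_if_almost_decreasing:
  fixes P :: "nat \<Rightarrow> ereal" and c :: "nat \<Rightarrow> real"
  assumes almost_decr: "\<And>n k. n \<ge> 1 \<Longrightarrow> k \<ge> 1 \<Longrightarrow> P n \<le> P k + ereal (c k / real n)"
  shows "P \<longlonglongrightarrow> (INF n\<in>{1..}. P n)"
proof (rule order_tendstoI)
  fix y assume "y < (INF n\<in>{1..}. P n)"
  then have "y < P n" if "n \<ge> 1" for n
    using INF_lower[of n "{1..}" P] that by (simp add: order_less_le_trans)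
  then show "eventually (\<lambda>n. y < P n) sequentially"
    using eventually_ge_at_top[of 1] by (rule eventually_mono[rotated])
next
  fix y assume "(INF n\<in>{1..}. P n) < y"
  then obtain k p where "k \<ge> 1" "P k < ereal p" "ereal p < y"
    by (auto simp: INF_less_iff dest: ereal_dense2)
  have "(\<lambda>n. p + c k / real n) \<longlonglongrightarrow> p"
    using tendsto_add[OF tendsto_const lim_const_over_n, of p "c k"] by simp
  then have "eventually (\<lambda>n. ereal (p + c k / real n) < y) sequentially"
    using order_tendstoD(2)[OF tendsto_ereal \<open>ereal p < y\<close>] by blast
  then show "eventually (\<lambda>n. P n < y) sequentially"
    using eventually_ge_at_top[of 1]
  proof eventually_elim
    case (elim n)
    have "P n \<le> P k + ereal (c k / real n)" using almost_decr[OF elim(2) \<open>k \<ge> 1\<close>] .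
    also have "\<dots> \<le> ereal p + ereal (c k / real n)"
      using \<open>P k < ereal p\<close> by (intro add_right_mono) simp
    finally show ?case using elim(1) by simp
  qed
qed

lemma ereal_tendsto_SUP_if_almost_increasing:
  fixes P :: "nat \<Rightarrow> ereal" and c :: "nat \<Rightarrow> real"
  assumes almost_incr: "\<And>n k. n \<ge> 1 \<Longrightarrow> k \<ge> 1 \<Longrightarrow> P k \<le> P n + ereal (c k / real n)"
  shows "P \<longlonglongrightarrow> (SUP n\<in>{1..}. P n)"
proof (rule order_tendstoI)
  fix y assume "(SUP n\<in>{1..}. P n) < y"
  then have "P n < y" if "n \<ge> 1" for n
    using SUP_upper[of n "{1..}" P] that by (simp add: order_le_less_trans)
  then show "eventually (\<lambda>n. P n < y) sequentially"
    using eventually_ge_at_top[of 1] by (rule eventually_mono[rotated])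
next
  fix y assume "y < (SUP n\<in>{1..}. P n)"
  then obtain k p where "k \<ge> 1" "y < ereal p" "ereal p < P k"
    by (auto simp: less_SUP_iff dest: ereal_dense2)
  have "(\<lambda>n. p - c k / real n) \<longlonglongrightarrow> p"
    using tendsto_diff[OF tendsto_const lim_const_over_n, of p "c k"] by simp
  then have "eventually (\<lambda>n. y < ereal (p - c k / real n)) sequentially"
    using order_tendstoD(1)[OF tendsto_ereal \<open>y < ereal p\<close>] by blast
  then show "eventually (\<lambda>n. y < P n) sequentially"
    using eventually_ge_at_top[of 1]
  proof eventually_elim
    case (elim n)
    have "ereal p < P n + ereal (c k / real n)"
      using \<open>ereal p < P k\<close> almost_incr[OF elim(2) \<open>k \<ge> 1\<close>] by (rule less_le_trans)
    then have "ereal (p - c k / real n) < P n"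
      by (cases "P n") auto
    with elim(1) show ?case by (rule less_trans)
  qed
qed

lemma
  assumes "\<nu> \<in> invariant_measures f M"
  shows invariant_measure_prob_space: "prob_space \<nu>"
    and sets_invariant_measure: "sets \<nu> = sets (restrict_space borel M)"
    and space_invariant_measure: "space \<nu> = M"
    and measure_preimage_invariant_measure:
      "\<And>A. A \<in> sets \<nu> \<Longrightarrow> measure \<nu> (f -` A \<inter> M) = measure \<nu> A"
proof -
  show sets: "sets \<nu> = sets (restrict_space borel M)"
    using assms by (simp add: invariant_measures_def)
  show "space \<nu> = M"
    using sets_eq_imp_space_eq[OF sets] by (simp add: space_restrict_space)
qed (use assms in \<open>auto simp: invariant_measures_def\<close>)

lemma borel_measurable_invariant_measure:
  assumes "\<nu> \<in> invariant_measures f M" and "continuous_on M g"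
  shows "g \<in> borel_measurable \<nu>"
  using borel_measurable_continuous_on_restrict[OF assms(2)]
  by (simp add: measurable_cong_sets[OF sets_invariant_measure[OF assms(1)] refl])

lemma measurable_funpow_invariant_measure:
  assumes \<nu>: "\<nu> \<in> invariant_measures f M" and "continuous_on M f" and "f ` M \<subseteq> M"
  shows "f ^^ n \<in> measurable \<nu> \<nu>"
proof -
  have "f \<in> measurable (restrict_space borel M) (restrict_space borel M)"
    using assms(3) borel_measurable_continuous_on_restrict[OF assms(2)]
    by (intro measurable_restrict_space2) (auto simp: space_restrict_space)
  then have "f \<in> measurable \<nu> \<nu>"
    using measurable_cong_sets[OF sets_invariant_measure[OF \<nu>] sets_invariant_measure[OF \<nu>]]
    by simp
  then show ?thesis
    by (induction n) (simp_all add: id_def funpow_Suc_right measurable_comp)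
qed

lemma distr_funpow_invariant_measure:
  assumes \<nu>: "\<nu> \<in> invariant_measures f M" and "continuous_on M f" and "f ` M \<subseteq> M"
  shows "distr \<nu> \<nu> (f ^^ n) = \<nu>"
proof -
  interpret prob_space \<nu> by (rule invariant_measure_prob_space[OF \<nu>])
  note space = space_invariant_measure[OF \<nu>]
  note measurable = measurable_funpow_invariant_measure[OF assms]
  have preimage: "emeasure \<nu> (f -` A \<inter> M) = emeasure \<nu> A" if "A \<in> sets \<nu>" for A
    using measure_preimage_invariant_measure[OF \<nu> that] by (simp add: emeasure_eq_measure)
  have "emeasure \<nu> ((f ^^ n) -` A \<inter> M) = emeasure \<nu> A" if A: "A \<in> sets \<nu>" for A
  proof (induction n)
    case 0
    then show ?case using sets.sets_into_space[OF A] space by (simp add: Int_absorb2)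
  next
    case (Suc n)
    have "(f ^^ Suc n) -` A \<inter> M = f -` ((f ^^ n) -` A \<inter> M) \<inter> M"
      using assms(3) by (auto simp: funpow_swap1)
    moreover have "(f ^^ n) -` A \<inter> M \<in> sets \<nu>"
      using measurable_sets[OF measurable A] space by simp
    ultimately show ?case
      using preimage[of "(f ^^ n) -` A \<inter> M"] Suc by (simp only:)
  qed
  then show ?thesis
    by (intro measure_eqI) (auto simp: emeasure_distr[OF measurable] space)
qed

lemma
  fixes g :: "'a::metric_space \<Rightarrow> 'b::{banach, second_countable_topology}"
  assumes "\<nu> \<in> invariant_measures f M" and "continuous_on M f" and "f ` M \<subseteq> M"
    and g: "g \<in> borel_measurable \<nu>"
  shows integral_funpow_invariant_measure:
      "(\<integral>x. g ((f ^^ n) x) \<partial>\<nu>) = (\<integral>x. g x \<partial>\<nu>)"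
    and integrable_funpow_invariant_measure:
      "integrable \<nu> g \<Longrightarrow> integrable \<nu> (\<lambda>x. g ((f ^^ n) x))"
  using integral_distr[OF measurable_funpow_invariant_measure[OF assms(1-3)] g]
    integrable_distr_eq[OF measurable_funpow_invariant_measure[OF assms(1-3)] g]
  by (simp_all add: distr_funpow_invariant_measure[OF assms(1-3)])

lemma (in prob_space) abs_integral_le_AE_bound:
  fixes g :: "'a \<Rightarrow> real"
  assumes "integrable M g" and "AE x in M. \<bar>g x\<bar> \<le> B"
  shows "\<bar>\<integral>x. g x \<partial>M\<bar> \<le> B"
proof -
  have "AE x in M. g x \<le> B" and "AE x in M. - B \<le> g x"
    using assms(2) by auto
  then have "(\<integral>x. g x \<partial>M) \<le> B" and "- B \<le> (\<integral>x. g x \<partial>M)"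
    using integral_le_const[OF assms(1)] integral_ge_const[OF assms(1)] by auto
  then show ?thesis by linarith
qed

lemma subadditive_integral_avg_le:
  fixes f :: "'a::metric_space \<Rightarrow> 'a" and \<phi> :: "nat \<Rightarrow> 'a \<Rightarrow> real"
  assumes \<nu>: "\<nu> \<in> invariant_measures f M" and f: "continuous_on M f" "f ` M \<subseteq> M"
    and cont: "\<And>n. n \<ge> 1 \<Longrightarrow> continuous_on M (\<phi> n)"
    and bound: "\<And>n. n \<ge> 1 \<Longrightarrow> AE x in \<nu>. \<bar>\<phi> n x\<bar> / real n \<le> L"
    and sub: "\<And>n m x. n \<ge> 1 \<Longrightarrow> m \<ge> 1 \<Longrightarrow> x \<in> M \<Longrightarrow>
                \<phi> (n + m) x \<le> \<phi> n x + \<phi> m ((f ^^ n) x)"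
    and "k \<ge> 1" and "n \<ge> 1"
  shows "(\<integral>x. \<phi> n x / real n \<partial>\<nu>) \<le> (\<integral>x. \<phi> k x / real k \<partial>\<nu>) + 2 * real k * L / real n"
proof -
  interpret prob_space \<nu>
    by (rule invariant_measure_prob_space[OF \<nu>])
  have meas: "\<phi> n \<in> borel_measurable \<nu>" if "n \<ge> 1" for n
    using borel_measurable_invariant_measure[OF \<nu> cont[OF that]] .
  have AE_bound: "AE x in \<nu>. \<bar>\<phi> n x\<bar> \<le> real n * L" if "n \<ge> 1" for n
    using bound[OF that] by eventually_elim (use that in \<open>simp add: field_simps\<close>)
  have int: "integrable \<nu> (\<phi> n)" if "n \<ge> 1" for n
    using AE_bound[OF that] meas[OF that] by (intro integrable_const_bound) auto
  have "(\<integral>x. \<phi> (n + m) x \<partial>\<nu>) \<le> (\<integral>x. \<phi> n x \<partial>\<nu>) + (\<integral>x. \<phi> m x \<partial>\<nu>)"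
    if "n \<ge> 1" "m \<ge> 1" for n m
  proof -
    have int_shift: "integrable \<nu> (\<lambda>x. \<phi> m ((f ^^ n) x))"
      using integrable_funpow_invariant_measure[OF \<nu> f meas int] \<open>m \<ge> 1\<close> by blast
    have "(\<integral>x. \<phi> (n + m) x \<partial>\<nu>) \<le> (\<integral>x. \<phi> n x + \<phi> m ((f ^^ n) x) \<partial>\<nu>)"
      using sub that int int_shift
      by (intro integral_mono) (auto simp: space_invariant_measure[OF \<nu>])
    also have "\<dots> = (\<integral>x. \<phi> n x \<partial>\<nu>) + (\<integral>x. \<phi> m x \<partial>\<nu>)"
      using int[OF \<open>n \<ge> 1\<close>] int_shift integral_funpow_invariant_measure[OF \<nu> f meas[OF \<open>m \<ge> 1\<close>]]
      by simp
    finally show ?thesis .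
  qed
  moreover have "\<bar>\<integral>x. \<phi> n x \<partial>\<nu>\<bar> \<le> real n * L" if "n \<ge> 1" for n
    using abs_integral_le_AE_bound[OF int AE_bound] that by blast
  ultimately have "(\<integral>x. \<phi> n x \<partial>\<nu>) / real n \<le> (\<integral>x. \<phi> k x \<partial>\<nu>) / real k + 2 * real k * L / real n"
    using \<open>k \<ge> 1\<close> \<open>n \<ge> 1\<close> by (rule subadditive_avg_le[where a = "\<lambda>n. \<integral>x. \<phi> n x \<partial>\<nu>"])
  then show ?thesis
    by simp
qed

lemma pressure_le_pressure_add:
  assumes "\<And>\<nu>. \<nu> \<in> invariant_measures f M \<Longrightarrow> (\<integral>x. \<phi> x \<partial>\<nu>) \<le> (\<integral>x. \<psi> x \<partial>\<nu>) + c"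
  shows "pressure f M \<phi> \<le> pressure f M \<psi> + ereal c"
  unfolding pressure_def
proof (rule SUP_least)
  fix \<nu> assume \<nu>: "\<nu> \<in> invariant_measures f M"
  have "ks_entropy \<nu> f + ereal (\<integral>x. \<phi> x \<partial>\<nu>) \<le> ks_entropy \<nu> f + (ereal (\<integral>x. \<psi> x \<partial>\<nu>) + ereal c)"
    using assms[OF \<nu>] by (intro add_left_mono) simp
  also have "\<dots> = (ks_entropy \<nu> f + ereal (\<integral>x. \<psi> x \<partial>\<nu>)) + ereal c"
    by (simp add: add.assoc)
  also have "\<dots> \<le> (SUP \<nu>\<in>invariant_measures f M. ks_entropy \<nu> f + ereal (\<integral>x. \<psi> x \<partial>\<nu>)) + ereal c"
    using \<nu> by (intro add_right_mono SUP_upper)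
  finally show "ks_entropy \<nu> f + ereal (\<integral>x. \<phi> x \<partial>\<nu>) \<le> \<dots>" .
qed
theorem lemma6p1:
  fixes f :: "'a::metric_space \<Rightarrow> 'a" and M :: "'a set"
    and \<phi> :: "nat \<Rightarrow> 'a \<Rightarrow> real" and L :: real
  assumes "compact M" and "continuous_on M f" and "f ` M \<subseteq> M"
    and "\<And>n. n \<ge> 1 \<Longrightarrow> continuous_on M (\<phi> n)"
    and "L > 0"
    and "\<And>\<nu> n. \<nu> \<in> invariant_measures f M \<Longrightarrow> n \<ge> 1 \<Longrightarrow>
           AE x in \<nu>. \<bar>\<phi> n x\<bar> / real n \<le> L"
  shows "((\<forall>n m x. n \<ge> 1 \<longrightarrow> m \<ge> 1 \<longrightarrow> x \<in> M \<longrightarrow>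
              \<phi> (n + m) x \<le> \<phi> n x + \<phi> m ((f ^^ n) x)) \<longrightarrow>
            ((\<lambda>n. pressure f M (\<lambda>x. \<phi> n x / real n))
               \<longlonglongrightarrow> (INF n\<in>{1..}. pressure f M (\<lambda>x. \<phi> n x / real n))))
       \<and> ((\<forall>n m x. n \<ge> 1 \<longrightarrow> m \<ge> 1 \<longrightarrow> x \<in> M \<longrightarrow>
              \<phi> (n + m) x \<ge> \<phi> n x + \<phi> m ((f ^^ n) x)) \<longrightarrow>
            ((\<lambda>n. pressure f M (\<lambda>x. \<phi> n x / real n))
               \<longlonglongrightarrow> (SUP n\<in>{1..}. pressure f M (\<lambda>x. \<phi> n x / real n))))"
proof (intro conjI impI)
  let ?P = "\<lambda>n. pressure f M (\<lambda>x. \<phi> n x / real n)"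
  assume "\<forall>n m x. n \<ge> 1 \<longrightarrow> m \<ge> 1 \<longrightarrow> x \<in> M \<longrightarrow> \<phi> (n + m) x \<le> \<phi> n x + \<phi> m ((f ^^ n) x)"
  then have "?P n \<le> ?P k + ereal (2 * real k * L / real n)" if "n \<ge> 1" "k \<ge> 1" for n k
    using that by (intro pressure_le_pressure_add subadditive_integral_avg_le[OF _ assms(2-4,6)]) auto
  then show "?P \<longlonglongrightarrow> (INF n\<in>{1..}. ?P n)"
    by (rule ereal_tendsto_INF_if_almost_decreasing[where c = "\<lambda>k. 2 * real k * L"])
next
  let ?P = "\<lambda>n. pressure f M (\<lambda>x. \<phi> n x / real n)"
  assume "\<forall>n m x. n \<ge> 1 \<longrightarrow> m \<ge> 1 \<longrightarrow> x \<in> M \<longrightarrow> \<phi> (n + m) x \<ge> \<phi> n x + \<phi> m ((f ^^ n) x)"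
  then have neg_sub: "- \<phi> (n + m) x \<le> - \<phi> n x + - \<phi> m ((f ^^ n) x)"
    if "n \<ge> 1" "m \<ge> 1" "x \<in> M" for n m x
    using that by force
  have "?P k \<le> ?P n + ereal (2 * real k * L / real n)" if "n \<ge> 1" "k \<ge> 1" for n k
  proof (intro pressure_le_pressure_add)
    fix \<nu> assume \<nu>: "\<nu> \<in> invariant_measures f M"
    have "(\<integral>x. - \<phi> n x / real n \<partial>\<nu>) \<le> (\<integral>x. - \<phi> k x / real k \<partial>\<nu>) + 2 * real k * L / real n"
      using that \<nu> assms neg_sub
      by (intro subadditive_integral_avg_le[where \<phi> = "\<lambda>n x. - \<phi> n x"]) (auto intro: continuous_on_minus)
    then show "(\<integral>x. \<phi> k x / real k \<partial>\<nu>) \<le> (\<integral>x. \<phi> n x / real n \<partial>\<nu>) + 2 * real k * L / real n"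
      by simp
  qed
  then show "?P \<longlonglongrightarrow> (SUP n\<in>{1..}. ?P n)"
    by (rule ereal_tendsto_SUP_if_almost_increasing[where c = "\<lambda>k. 2 * real k * L"])
qed

end
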